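(* Let $A\in\mathbb{R}^{n\times n}$, $\vec{x}_0\in\mathbb{R}^n$, and $\vec{x}_{t+1}=A\vec{x}_t$ for $t=0,1,2,\ldots$. For $j\ge 0$ let $X_j=[\vec{x}_0\ \vec{x}_1\ \cdots\ \vec{x}_j]\in\mathbb{R}^{n\times(j+1)}$ and $Y_j=[\vec{x}_1\ \vec{x}_2\ \cdots\ \vec{x}_{j+1}]$, and let $\hat{A}_j=Y_jX_j^{\dagger}$. Let $k$ be an integer with $1\le k<n$. Let $U_{k-1}$ be the matrix whose columns are the left singular vectors of $X_{k-1}$ corresponding to its nonzero singular values (economic SVD), so that $X_{k-1}X_{k-1}^{\dagger}=U_{k-1}U_{k-1}^\top$, and define $$S_k=I-U_{k-1}U_{k-1}^\top,\qquad P_k=\vec{x}_k\vec{x}_k^\top=A^k\vec{x}_0\vec{x}_0^\top (A^k)^\top .$$ Assume $\mathrm{Tr}(S_kP_k)\neq 0$. Then $\hat{A}_k=A(I-E_k)$, where $$E_k=\left(I-\frac{S_kP_k}{\mathrm{Tr}(S_kP_k)}\right)S_k,$$ and moreover $$\|E_k\|_2\le\left\|I-\frac{S_kP_k}{\mathrm{Tr}(S_kP_k)}\right\|_2 .$$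
   Context: $M^{\dagger}$ denotes the Moore–Penrose pseudo-inverse of $M$; $\hat{A}_j$ is the least-squares solution of $\min_A\|Y_j-AX_j\|_F$. $\|\cdot\|_2$ is the spectral norm and $\mathrm{Tr}$ the trace. $I$ is the $n\times n$ identity. *)

theory Defs
  imports Complex_Main "Jordan_Normal_Form.Matrix"
begin

definition mtrace :: "real mat \<Rightarrow> real" where
  "mtrace M = (\<Sum>i<dim_row M. M $$ (i, i))"

definition is_pinv :: "real mat \<Rightarrow> real mat \<Rightarrow> bool" where
  "is_pinv M B \<longleftrightarrow> B \<in> carrier_mat (dim_col M) (dim_row M) \<and>
     M * B * M = M \<and> B * M * B = B \<and>
     transpose_mat (M * B) = M * B \<and> transpose_mat (B * M) = B * M"

definition pinv :: "real mat \<Rightarrow> real mat" where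
  "pinv M = (THE B. is_pinv M B)"

definition vnorm2 :: "real vec \<Rightarrow> real" where
  "vnorm2 v = sqrt (v \<bullet> v)"

definition spec_norm :: "real mat \<Rightarrow> real" where
  "spec_norm M = Sup {vnorm2 (M *\<^sub>v v) | v. v \<in> carrier_vec (dim_col M) \<and> vnorm2 v \<le> 1}"

definition traj :: "real mat \<Rightarrow> real vec \<Rightarrow> nat \<Rightarrow> real vec" where
  "traj A x0 t = (A ^\<^sub>m t) *\<^sub>v x0"

definition Xmat :: "real mat \<Rightarrow> real vec \<Rightarrow> nat \<Rightarrow> real mat" where
  "Xmat A x0 j = mat (dim_vec x0) (j + 1) (\<lambda>(i, c). traj A x0 c $ i)"

definition Ymat :: "real mat \<Rightarrow> real vec \<Rightarrow> nat \<Rightarrow> real mat" where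
  "Ymat A x0 j = mat (dim_vec x0) (j + 1) (\<lambda>(i, c). traj A x0 (c + 1) $ i)"

definition Ahat :: "real mat \<Rightarrow> real vec \<Rightarrow> nat \<Rightarrow> real mat" where
  "Ahat A x0 j = Ymat A x0 j * pinv (Xmat A x0 j)"

end

theory Submission
  imports Defs
begin

text \<open>
  For any matrix \<open>X\<close>, \<open>X X\<^sup>+\<close> is the orthogonal projector onto the column space of \<open>X\<close>, and
  \<open>X\<^sup>+\<close> is determined by this projector together with the one onto the row space. Appending
  a column \<open>a\<close> to \<open>X\<close> turns the projector \<open>Q\<close> into \<open>Q + w w\<^sup>T / (w\<^sup>T w)\<close>, where
  \<open>w = a - Q a\<close>. Since \<open>Y\<^sub>k = A X\<^sub>k\<close>, the estimate is \<open>A X\<^sub>k X\<^sub>k\<^sup>+\<close>. With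
  \<open>Q = X\<^sub>k\<^sub>-\<^sub>1 X\<^sub>k\<^sub>-\<^sub>1\<^sup>+\<close>, \<open>S\<^sub>k = I - Q\<close> and \<open>w = S\<^sub>k x\<^sub>k\<close> one has \<open>S\<^sub>k P\<^sub>k = w x\<^sub>k\<^sup>T\<close> and
  \<open>Tr (S\<^sub>k P\<^sub>k) = w\<^sup>T w\<close>, hence \<open>E\<^sub>k = S\<^sub>k - w w\<^sup>T / (w\<^sup>T w)\<close>: \<open>I - E\<^sub>k\<close> is the updated projector
  \<open>X\<^sub>k X\<^sub>k\<^sup>+\<close>. The norm bound holds because \<open>E\<^sub>k\<close> is the matrix on the right-hand side
  followed by the orthogonal projector \<open>S\<^sub>k\<close>, which is a contraction.
\<close>

section \<open>Outer products and orthogonal projectors\<close>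

definition outer_prod :: "'a :: times vec \<Rightarrow> 'a vec \<Rightarrow> 'a mat" where
  "outer_prod u w = mat (dim_vec u) (dim_vec w) (\<lambda>(i, j). u $ i * w $ j)"

lemma outer_prod_carrier [simp]:
  "u \<in> carrier_vec m \<Longrightarrow> w \<in> carrier_vec n \<Longrightarrow> outer_prod u w \<in> carrier_mat m n"
  unfolding outer_prod_def by auto

lemma dim_outer_prod [simp]:
  "dim_row (outer_prod u w) = dim_vec u" "dim_col (outer_prod u w) = dim_vec w"
  unfolding outer_prod_def by simp_all

lemma index_outer_prod [simp]:
  "i < dim_vec u \<Longrightarrow> j < dim_vec w \<Longrightarrow> outer_prod u w $$ (i, j) = u $ i * w $ j"
  unfolding outer_prod_def by simp

lemma mult_outer_prod:
  fixes A :: "'a :: comm_semiring_0 mat"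
  assumes "A \<in> carrier_mat m n" "u \<in> carrier_vec n"
  shows "A * outer_prod u w = outer_prod (A *\<^sub>v u) w"
  using assms
  by (intro eq_matI) (auto simp: scalar_prod_def sum_distrib_right mult.assoc intro!: sum.cong)

lemma outer_prod_mult:
  fixes B :: "'a :: comm_semiring_0 mat"
  assumes "B \<in> carrier_mat n p" "w \<in> carrier_vec n"
  shows "outer_prod u w * B = outer_prod u (transpose_mat B *\<^sub>v w)"
  using assms
  by (intro eq_matI) (auto simp: scalar_prod_def sum_distrib_left mult_ac intro!: sum.cong)

lemma outer_prod_mult_vec:
  fixes w :: "'a :: comm_semiring_0 vec"
  assumes "w \<in> carrier_vec n" "v \<in> carrier_vec n"
  shows "outer_prod u w *\<^sub>v v = (w \<bullet> v) \<cdot>\<^sub>v u"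
  using assms by (intro eq_vecI) (auto simp: scalar_prod_def sum_distrib_left mult_ac)

lemma mtrace_outer_prod: "dim_vec w = dim_vec u \<Longrightarrow> mtrace (outer_prod u w) = u \<bullet> w"
  unfolding mtrace_def scalar_prod_def by (auto simp: atLeast0LessThan)

lemma mult_mat_of_cols:
  fixes A :: "'a :: comm_semiring_0 mat"
  assumes "A \<in> carrier_mat m n" "set vs \<subseteq> carrier_vec n"
  shows "A * mat_of_cols n vs = mat_of_cols m (map (\<lambda>v. A *\<^sub>v v) vs)"
  using assms
  by (intro eq_matI) (auto simp: mat_of_cols_index col_mat_of_cols[OF _ subsetD[OF assms(2) nth_mem]])

lemma mat_of_cols_snoc_mult_mat_of_rows_snoc:
  fixes a :: "'a :: comm_semiring_0 vec"
  assumes "length vs = length rs" "set vs \<subseteq> carrier_vec m" "a \<in> carrier_vec m"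
    "set rs \<subseteq> carrier_vec p" "b \<in> carrier_vec p"
  shows "mat_of_cols m (vs @ [a]) * mat_of_rows p (rs @ [b])
       = mat_of_cols m vs * mat_of_rows p rs + outer_prod a b"
proof (rule eq_matI)
  fix i j assume "i < dim_row (mat_of_cols m vs * mat_of_rows p rs + outer_prod a b)"
    and "j < dim_col (mat_of_cols m vs * mat_of_rows p rs + outer_prod a b)"
  then have ij: "i < m" "j < p" using assms by auto
  have "(mat_of_cols m (vs @ [a]) * mat_of_rows p (rs @ [b])) $$ (i, j)
      = (\<Sum>l<Suc (length vs). (vs @ [a]) ! l $ i * (rs @ [b]) ! l $ j)"
    using ij assms by (simp add: scalar_prod_def mat_of_cols_index mat_of_rows_index atLeast0LessThan)
  also have "\<dots> = (\<Sum>l<length vs. vs ! l $ i * rs ! l $ j) + a $ i * b $ j"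
    using assms by (simp add: nth_append)
  also have "\<dots> = (mat_of_cols m vs * mat_of_rows p rs + outer_prod a b) $$ (i, j)"
    using ij assms by (simp add: scalar_prod_def mat_of_cols_index mat_of_rows_index atLeast0LessThan)
  finally show "(mat_of_cols m (vs @ [a]) * mat_of_rows p (rs @ [b])) $$ (i, j)
      = (mat_of_cols m vs * mat_of_rows p rs + outer_prod a b) $$ (i, j)" .
qed (use assms in auto)

lemma proj_mult_compl:
  fixes Q :: "'a :: ring mat"
  assumes Q: "Q \<in> carrier_mat n n" and idem: "Q * Q = Q" and v: "v \<in> carrier_vec n"
  shows "Q *\<^sub>v (v - Q *\<^sub>v v) = 0\<^sub>v n"
proof -
  have "Q *\<^sub>v (v - Q *\<^sub>v v) = Q *\<^sub>v v - Q *\<^sub>v (Q *\<^sub>v v)"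
    using mult_minus_distrib_mat_vec[OF Q v, of "Q *\<^sub>v v"] Q v by simp
  also have "Q *\<^sub>v (Q *\<^sub>v v) = Q *\<^sub>v v"
    using assoc_mult_mat_vec[OF Q Q v] idem by simp
  finally show ?thesis using Q v by (intro eq_vecI) auto
qed

lemma compl_scalar_prod_proj:
  fixes Q :: "'a :: comm_ring mat"
  assumes Q: "Q \<in> carrier_mat n n" and sym: "transpose_mat Q = Q" and idem: "Q * Q = Q"
    and v: "v \<in> carrier_vec n" and y: "y \<in> carrier_vec n"
  shows "(v - Q *\<^sub>v v) \<bullet> (Q *\<^sub>v y) = 0"
proof -
  have "(v - Q *\<^sub>v v) \<bullet> (Q *\<^sub>v y) = (transpose_mat Q *\<^sub>v (v - Q *\<^sub>v v)) \<bullet> y"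
    using transpose_vec_mult_scalar[OF Q y, of "v - Q *\<^sub>v v"] Q v by simp
  then show ?thesis using proj_mult_compl[OF Q idem v] sym y by simp
qed

lemma vnorm2_proj_compl_le:
  fixes Q :: "real mat"
  assumes Q: "Q \<in> carrier_mat n n" and sym: "transpose_mat Q = Q" and idem: "Q * Q = Q"
    and v: "v \<in> carrier_vec n"
  shows "vnorm2 ((1\<^sub>m n - Q) *\<^sub>v v) \<le> vnorm2 v"
proof -
  have Sv: "(1\<^sub>m n - Q) *\<^sub>v v = v - Q *\<^sub>v v"
    using minus_mult_distrib_mat_vec[OF one_carrier_mat Q v] v by simp
  define u where "u = Q *\<^sub>v v"
  define w where "w = v - u"
  have u: "u \<in> carrier_vec n" and w: "w \<in> carrier_vec n" using Q v by (auto simp: u_def w_def)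
  have wu: "w \<bullet> u = 0" using compl_scalar_prod_proj[OF Q sym idem v v] by (simp add: u_def w_def)
  have "v = w + u" using u v by (intro eq_vecI) (auto simp: w_def)
  then have "v \<bullet> v = w \<bullet> w + u \<bullet> u"
    using add_scalar_prod_distrib[OF w u, of "w + u"] scalar_prod_add_distrib[OF w w u]
      scalar_prod_add_distrib[OF u w u] comm_scalar_prod[OF u w] wu w u by simp
  then show ?thesis
    unfolding vnorm2_def Sv u_def[symmetric] w_def[symmetric]
    using conjugate_square_ge_0_vec[of u] by simp
qed

section \<open>Column-space projectors and the pseudo-inverse\<close>

text \<open>
  \<open>Q\<close> is the orthogonal projector onto the column space of \<open>M\<close>; idempotence follows
  (\<open>is_col_proj_mult_absorb\<close> with \<open>R = Q\<close>).
\<close>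

definition is_col_proj :: "real mat \<Rightarrow> real mat \<Rightarrow> bool" where
  "is_col_proj M Q \<longleftrightarrow> Q \<in> carrier_mat (dim_row M) (dim_row M) \<and> transpose_mat Q = Q \<and> Q * M = M
     \<and> (\<exists>C \<in> carrier_mat (dim_col M) (dim_row M). Q = M * C)"

lemma is_col_proj_mult_absorb:
  assumes "is_col_proj M Q" "is_col_proj M R"
  shows "Q * R = R"
proof -
  obtain C where C: "C \<in> carrier_mat (dim_col M) (dim_row M)" and R: "R = M * C"
    using assms(2) unfolding is_col_proj_def by blast
  have Q: "Q \<in> carrier_mat (dim_row M) (dim_row M)" and QM: "Q * M = M"
    using assms(1) unfolding is_col_proj_def by auto
  have "Q * (M * C) = Q * M * C" using assoc_mult_mat[OF Q _ C] by simp
  then show ?thesis using R QM by simp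
qed

lemma is_col_proj_unique:
  assumes Q: "is_col_proj M Q" and R: "is_col_proj M R"
  shows "Q = R"
proof -
  have carrier: "Q \<in> carrier_mat (dim_row M) (dim_row M)" "R \<in> carrier_mat (dim_row M) (dim_row M)"
    and sym: "transpose_mat Q = Q" "transpose_mat R = R"
    using Q R unfolding is_col_proj_def by auto
  have "Q = transpose_mat (R * Q)" using is_col_proj_mult_absorb[OF R Q] sym by simp
  also have "\<dots> = Q * R" using transpose_mult[OF carrier(2,1)] sym by simp
  also have "\<dots> = R" using is_col_proj_mult_absorb[OF Q R] .
  finally show ?thesis .
qed

lemma is_pinv_col_proj:
  assumes "is_pinv M B"
  shows "is_col_proj M (M * B)"
  using assms unfolding is_pinv_def is_col_proj_def by auto

lemma is_pinv_col_proj_transpose: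
  assumes "is_pinv M B"
  shows "is_col_proj (transpose_mat M) (B * M)"
proof -
  have M: "M \<in> carrier_mat (dim_row M) (dim_col M)" by simp
  have B: "B \<in> carrier_mat (dim_col M) (dim_row M)"
    and MBM: "M * B * M = M" and sym: "transpose_mat (B * M) = B * M"
    using assms unfolding is_pinv_def by auto
  have "B * M * transpose_mat M = transpose_mat (M * (B * M))"
    using transpose_mult[OF M mult_carrier_mat[OF B M]] sym by simp
  also have "\<dots> = transpose_mat M" using MBM assoc_mult_mat[OF M B M] by simp
  finally have "B * M * transpose_mat M = transpose_mat M" .
  moreover have "B * M = transpose_mat M * transpose_mat B"
    using transpose_mult[OF B M] sym by simp
  ultimately show ?thesis using B sym unfolding is_col_proj_def by auto
qed

lemma pinv_unique:
  assumes B1: "is_pinv M B1" and B2: "is_pinv M B2"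
  shows "B1 = B2"
proof -
  have M: "M \<in> carrier_mat (dim_row M) (dim_col M)" by simp
  have c1: "B1 \<in> carrier_mat (dim_col M) (dim_row M)" and c2: "B2 \<in> carrier_mat (dim_col M) (dim_row M)"
    using B1 B2 unfolding is_pinv_def by auto
  have "B1 = B1 * (M * B1)"
    using B1 assoc_mult_mat[OF c1 M c1] unfolding is_pinv_def by simp
  also have "\<dots> = B1 * (M * B2)"
    using is_col_proj_unique[OF is_pinv_col_proj[OF B1] is_pinv_col_proj[OF B2]] by simp
  also have "\<dots> = (B1 * M) * B2" using assoc_mult_mat[OF c1 M c2] by simp
  also have "\<dots> = (B2 * M) * B2"
    using is_col_proj_unique[OF is_pinv_col_proj_transpose[OF B1] is_pinv_col_proj_transpose[OF B2]]
    by simp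
  also have "\<dots> = B2" using B2 unfolding is_pinv_def by simp
  finally show ?thesis .
qed

lemma smult_inverse_self_scalar_prod:
  fixes w :: "real vec"
  assumes "w \<in> carrier_vec n"
  shows "(1 / (w \<bullet> w) * (w \<bullet> w)) \<cdot>\<^sub>v w = w"
proof (cases "w \<bullet> w = 0")
  case True
  then have "w = 0\<^sub>v n" using conjugate_square_eq_0_vec[OF assms] by simp
  then show ?thesis by auto
qed simp

lemma add_smult_outer_prod_mult_vec:
  fixes Q :: "'a :: comm_ring mat"
  assumes "Q \<in> carrier_mat n n" "w \<in> carrier_vec n" "v \<in> carrier_vec n"
  shows "(Q + c \<cdot>\<^sub>m outer_prod w w) *\<^sub>v v = Q *\<^sub>v v + (c * (w \<bullet> v)) \<cdot>\<^sub>v w"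
proof -
  have "Q + c \<cdot>\<^sub>m outer_prod w w = Q + outer_prod (c \<cdot>\<^sub>v w) w"
    using assms by (intro eq_matI) (auto simp: mult.assoc)
  then show ?thesis
    using add_mult_distrib_mat_vec[OF assms(1) _ assms(3), of "outer_prod (c \<cdot>\<^sub>v w) w"]
      outer_prod_mult_vec[OF assms(2,3)] assms by (simp add: smult_smult_assoc mult.commute)
qed

lemma is_col_proj_fixes_cols:
  assumes Q: "is_col_proj (mat_of_cols m vs) Q" and vs: "set vs \<subseteq> carrier_vec m" and v: "v \<in> set vs"
  shows "Q *\<^sub>v v = v"
proof -
  have Qc: "Q \<in> carrier_mat m m" and QM: "Q * mat_of_cols m vs = mat_of_cols m vs"
    using Q unfolding is_col_proj_def by auto
  have "set (map (\<lambda>v. Q *\<^sub>v v) vs) \<subseteq> carrier_vec m" using Qc vs by (auto intro!: mult_mat_vec_carrier)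
  then have "map (\<lambda>v. Q *\<^sub>v v) vs = cols (Q * mat_of_cols m vs)"
    unfolding mult_mat_of_cols[OF Qc vs] by simp
  also have "\<dots> = vs" using QM vs by simp
  finally show ?thesis using v by (metis map_eq_conv list.map_id id_apply)
qed

text \<open>
  No rank condition is needed in the following three lemmas: if \<open>a\<close> already lies in the
  column space then \<open>w = 0\<close> and, as \<open>1 / 0 = 0\<close>, the projector is left unchanged.
\<close>

lemma col_proj_snoc_fixes_cols:
  assumes Q: "is_col_proj (mat_of_cols m vs) Q"
    and vs: "set vs \<subseteq> carrier_vec m" and a: "a \<in> carrier_vec m"
    and w: "w = a - Q *\<^sub>v a"
  shows "(Q + (1 / (w \<bullet> w)) \<cdot>\<^sub>m outer_prod w w) * mat_of_cols m (vs @ [a]) = mat_of_cols m (vs @ [a])"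
proof -
  have Qc: "Q \<in> carrier_mat m m" and sym: "transpose_mat Q = Q"
    using Q unfolding is_col_proj_def by auto
  have idem: "Q * Q = Q" using is_col_proj_mult_absorb[OF Q Q] .
  have Qa: "Q *\<^sub>v a \<in> carrier_vec m" and wc: "w \<in> carrier_vec m" using w a Qc by auto
  have wa: "w \<bullet> a = w \<bullet> w"
  proof -
    have "a = w + Q *\<^sub>v a" using w a Qa Qc by (intro eq_vecI) auto
    then have "w \<bullet> a = w \<bullet> w + w \<bullet> (Q *\<^sub>v a)"
      using scalar_prod_add_distrib[OF wc wc Qa] by simp
    then show ?thesis using compl_scalar_prod_proj[OF Qc sym idem a a] w by simp
  qed
  have "(Q + (1 / (w \<bullet> w)) \<cdot>\<^sub>m outer_prod w w) *\<^sub>v v = v" if "v \<in> set (vs @ [a])" for v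
  proof -
    from that consider "v \<in> set vs" | "v = a" by auto
    then show ?thesis
    proof cases
      case 1
      have "w \<bullet> v = 0"
        using compl_scalar_prod_proj[OF Qc sym idem a, of v] is_col_proj_fixes_cols[OF Q vs 1] 1 vs w
        by auto
      then show ?thesis
        using add_smult_outer_prod_mult_vec[OF Qc wc, of v] is_col_proj_fixes_cols[OF Q vs 1] 1 vs wc
        by (auto intro!: eq_vecI)
    next
      case 2
      have "a = Q *\<^sub>v a + w" using w a Qa Qc by (intro eq_vecI) auto
      then show ?thesis
        using 2 add_smult_outer_prod_mult_vec[OF Qc wc a] wa smult_inverse_self_scalar_prod[OF wc]
        by simp
    qed
  qed
  then have "map (\<lambda>v. (Q + (1 / (w \<bullet> w)) \<cdot>\<^sub>m outer_prod w w) *\<^sub>v v) (vs @ [a]) = vs @ [a]"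
    by (rule map_idI)
  then show ?thesis using mult_mat_of_cols[of _ m m "vs @ [a]"] Qc wc vs a by simp
qed

lemma col_proj_snoc_range:
  assumes Q: "is_col_proj (mat_of_cols m vs) Q"
    and vs: "set vs \<subseteq> carrier_vec m" and a: "a \<in> carrier_vec m"
    and w: "w = a - Q *\<^sub>v a"
  shows "\<exists>C' \<in> carrier_mat (length (vs @ [a])) m.
           Q + (1 / (w \<bullet> w)) \<cdot>\<^sub>m outer_prod w w = mat_of_cols m (vs @ [a]) * C'"
proof -
  define M where "M = mat_of_cols m vs"
  define s where "s = 1 / (w \<bullet> w)"
  have M: "M \<in> carrier_mat m (length vs)" unfolding M_def by simp
  have Qc: "Q \<in> carrier_mat m m" using Q unfolding is_col_proj_def by auto
  obtain C where C: "C \<in> carrier_mat (length vs) m" and QC: "Q = M * C"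
    using Q unfolding is_col_proj_def M_def by auto
  have wc: "w \<in> carrier_vec m" using w a Qc by simp
  define D where "D = C - s \<cdot>\<^sub>m outer_prod (C *\<^sub>v a) w"
  have O: "outer_prod (C *\<^sub>v a) w \<in> carrier_mat (length vs) m" using C wc by auto
  have D: "D \<in> carrier_mat (length vs) m" unfolding D_def using O by (simp add: minus_carrier_mat)
  define C' where "C' = mat_of_rows m (rows D @ [s \<cdot>\<^sub>v w])"
  have C': "C' \<in> carrier_mat (length (vs @ [a])) m"
    unfolding C'_def using mat_of_rows_carrier(1)[of m "rows D @ [s \<cdot>\<^sub>v w]"] D by simp
  have "mat_of_cols m (vs @ [a]) * C' = M * D + outer_prod a (s \<cdot>\<^sub>v w)"
  proof -
    have "mat_of_rows m (rows D) = D" using mat_of_rows_rows[of D] D by simp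
    moreover have "set (rows D) \<subseteq> carrier_vec m" using rows_carrier[of D] D by simp
    ultimately show ?thesis
      unfolding C'_def M_def using mat_of_cols_snoc_mult_mat_of_rows_snoc[OF _ vs a] D wc by simp
  qed
  also have "M * D = Q - s \<cdot>\<^sub>m outer_prod (Q *\<^sub>v a) w"
  proof -
    have "M * D = M * C - s \<cdot>\<^sub>m (M * outer_prod (C *\<^sub>v a) w)"
      unfolding D_def using mult_minus_distrib_mat[OF M C] mult_smult_distrib[OF M O] O by simp
    also have "M * outer_prod (C *\<^sub>v a) w = outer_prod (Q *\<^sub>v a) w"
      using mult_outer_prod[OF M, of "C *\<^sub>v a"] QC M C a by simp
    finally show ?thesis using QC by simp
  qed
  also have "Q - s \<cdot>\<^sub>m outer_prod (Q *\<^sub>v a) w + outer_prod a (s \<cdot>\<^sub>v w) = Q + s \<cdot>\<^sub>m outer_prod w w"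
    using Qc a wc w by (intro eq_matI) (auto simp: algebra_simps)
  finally show ?thesis unfolding s_def using C' by metis
qed

lemma is_col_proj_snoc:
  assumes Q: "is_col_proj (mat_of_cols m vs) Q"
    and vs: "set vs \<subseteq> carrier_vec m" and a: "a \<in> carrier_vec m"
    and w: "w = a - Q *\<^sub>v a"
  shows "is_col_proj (mat_of_cols m (vs @ [a])) (Q + (1 / (w \<bullet> w)) \<cdot>\<^sub>m outer_prod w w)"
proof -
  define Q' where "Q' = Q + (1 / (w \<bullet> w)) \<cdot>\<^sub>m outer_prod w w"
  have Qc: "Q \<in> carrier_mat m m" and sym: "transpose_mat Q = Q"
    using Q unfolding is_col_proj_def by auto
  have wc: "w \<in> carrier_vec m" using w a Qc by simp
  have Q'c: "Q' \<in> carrier_mat m m" unfolding Q'_def using Qc wc by simp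
  have "transpose_mat Q' = Q'"
  proof (rule eq_matI)
    fix i j assume "i < dim_row Q'" "j < dim_col Q'"
    then show "transpose_mat Q' $$ (i, j) = Q' $$ (i, j)"
      using arg_cong[OF sym, of "\<lambda>X. X $$ (i, j)"] Q'c Qc wc by (simp add: Q'_def mult.commute)
  qed (use Q'c in auto)
  then show ?thesis
    using Q'c col_proj_snoc_fixes_cols[OF assms] col_proj_snoc_range[OF assms]
    unfolding is_col_proj_def Q'_def by simp
qed

lemma col_proj_exists: "\<exists>Q. is_col_proj M Q"
proof -
  have "\<exists>Q. is_col_proj (mat_of_cols m vs) Q" if "set vs \<subseteq> carrier_vec m" for m and vs :: "real vec list"
    using that
  proof (induction vs rule: rev_induct)
    case Nil
    have "is_col_proj (mat_of_cols m []) (0\<^sub>m m m)"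
      unfolding is_col_proj_def
    proof (intro conjI bexI)
      show "0\<^sub>m m m = mat_of_cols m [] * 0\<^sub>m 0 m"
        by (auto intro!: eq_matI simp: scalar_prod_def)
    qed (auto intro!: eq_matI)
    then show ?case ..
  next
    case (snoc a vs)
    then obtain Q where "is_col_proj (mat_of_cols m vs) Q" by auto
    with is_col_proj_snoc[OF this, of a] snoc.prems show ?case by auto
  qed
  then show ?thesis using mat_of_cols_cols[of M] by (metis cols_dim)
qed

lemma pinv_exists: "\<exists>B. is_pinv M B"
proof -
  define m c where "m = dim_row M" and "c = dim_col M"
  have M: "M \<in> carrier_mat m c" and MT: "transpose_mat M \<in> carrier_mat c m"
    unfolding m_def c_def by auto
  obtain Q where Q: "is_col_proj M Q" using col_proj_exists by blast
  then obtain C where C: "C \<in> carrier_mat c m" and QC: "Q = M * C"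
    and Qc: "Q \<in> carrier_mat m m" and QM: "Q * M = M" and Qsym: "transpose_mat Q = Q"
    unfolding is_col_proj_def m_def c_def by auto
  obtain R where R: "is_col_proj (transpose_mat M) R" using col_proj_exists by blast
  then obtain D where D: "D \<in> carrier_mat m c" and RD: "R = transpose_mat M * D"
    and Rc: "R \<in> carrier_mat c c" and RM: "R * transpose_mat M = transpose_mat M"
    and Rsym: "transpose_mat R = R"
    unfolding is_col_proj_def m_def c_def by auto
  define B where "B = R * C"
  have B: "B \<in> carrier_mat c m" unfolding B_def using Rc C by simp
  have MR: "M * R = M"
    using arg_cong[OF RM, of transpose_mat] transpose_mult[OF Rc MT] Rsym by simp
  have R_eq: "R = transpose_mat D * M"
    using arg_cong[OF RD, of transpose_mat] transpose_mult[OF MT D] Rsym by simp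
  have MB: "M * B = Q" unfolding B_def using assoc_mult_mat[OF M Rc C] MR QC by simp
  have BM: "B * M = R"
  proof -
    have "B * M = R * (C * M)" unfolding B_def using assoc_mult_mat[OF Rc C M] .
    also have "\<dots> = transpose_mat D * (M * (C * M))"
      unfolding R_eq using assoc_mult_mat[of "transpose_mat D" c m M c "C * M" c] D M C by simp
    also have "M * (C * M) = M" using assoc_mult_mat[OF M C M] QC QM by simp
    finally show ?thesis using R_eq by simp
  qed
  have "B * M * B = B"
    unfolding BM unfolding B_def using assoc_mult_mat[OF Rc Rc C, symmetric] is_col_proj_mult_absorb[OF R R] by simp
  then have "is_pinv M B"
    unfolding is_pinv_def using B MB BM QM Qsym Rsym m_def c_def by simp
  then show ?thesis ..
qed

lemma is_pinv_pinv: "is_pinv M (pinv M)"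
  unfolding pinv_def using pinv_exists pinv_unique by (metis theI)

lemma mult_pinv_eq_col_proj: "is_col_proj M Q \<Longrightarrow> M * pinv M = Q"
  using is_col_proj_unique[OF is_pinv_col_proj[OF is_pinv_pinv]] .

section \<open>The spectral norm\<close>

lemma spec_norm_bdd_above:
  "bdd_above {vnorm2 (M *\<^sub>v v) | v. v \<in> carrier_vec (dim_col M) \<and> vnorm2 v \<le> 1}"
proof (rule bdd_aboveI, safe)
  define r where "r i = (\<Sum>j<dim_col M. \<bar>M $$ (i, j)\<bar>)" for i
  fix v :: "real vec" assume v: "v \<in> carrier_vec (dim_col M)" and nv: "vnorm2 v \<le> 1"
  have vj: "\<bar>v $ j\<bar> \<le> 1" if "j < dim_col M" for j
  proof -
    have "v $ j * v $ j \<le> v \<bullet> v"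
      using that v unfolding scalar_prod_def by (intro member_le_sum) auto
    also have "v \<bullet> v \<le> 1" using nv unfolding vnorm2_def by simp
    finally show ?thesis using abs_square_le_1[of "v $ j"] by (simp add: power2_eq_square)
  qed
  have r_nonneg: "0 \<le> r i" for i unfolding r_def by (intro sum_nonneg) auto
  have Mv: "\<bar>(M *\<^sub>v v) $ i\<bar> \<le> r i" if i: "i < dim_row M" for i
  proof -
    have "\<bar>(M *\<^sub>v v) $ i\<bar> = \<bar>\<Sum>j<dim_col M. M $$ (i, j) * v $ j\<bar>"
      using i v by (simp add: scalar_prod_def atLeast0LessThan)
    also have "\<dots> \<le> (\<Sum>j<dim_col M. \<bar>M $$ (i, j)\<bar> * \<bar>v $ j\<bar>)"
      by (rule order_trans[OF sum_abs]) (simp add: abs_mult)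
    also have "\<dots> \<le> r i" unfolding r_def using vj by (intro sum_mono mult_left_le) auto
    finally show ?thesis .
  qed
  have "(M *\<^sub>v v) \<bullet> (M *\<^sub>v v) = (\<Sum>i<dim_row M. ((M *\<^sub>v v) $ i)\<^sup>2)"
    by (simp add: scalar_prod_def atLeast0LessThan power2_eq_square)
  also have "\<dots> \<le> (\<Sum>i<dim_row M. (r i)\<^sup>2)"
    using Mv by (intro sum_mono) (simp add: abs_le_square_iff[symmetric] abs_of_nonneg r_nonneg)
  finally show "vnorm2 (M *\<^sub>v v) \<le> sqrt (\<Sum>i<dim_row M. (r i)\<^sup>2)"
    unfolding vnorm2_def by simp
qed

lemma spec_norm_mult_contraction_le:
  assumes N: "N \<in> carrier_mat m n" and S: "S \<in> carrier_mat n n"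
    and contraction: "\<And>v. v \<in> carrier_vec n \<Longrightarrow> vnorm2 (S *\<^sub>v v) \<le> vnorm2 v"
  shows "spec_norm (N * S) \<le> spec_norm N"
  unfolding spec_norm_def
proof (rule cSup_least)
  show "{vnorm2 (N * S *\<^sub>v v) |v. v \<in> carrier_vec (dim_col (N * S)) \<and> vnorm2 v \<le> 1} \<noteq> {}"
    using N S by (auto simp: vnorm2_def intro!: exI[of _ "0\<^sub>v n"])
next
  fix y assume "y \<in> {vnorm2 (N * S *\<^sub>v v) |v. v \<in> carrier_vec (dim_col (N * S)) \<and> vnorm2 v \<le> 1}"
  then obtain v where y: "y = vnorm2 (N *\<^sub>v (S *\<^sub>v v))" and v: "v \<in> carrier_vec n" and "vnorm2 v \<le> 1"
    using N S by auto
  then have "vnorm2 (S *\<^sub>v v) \<le> 1" using contraction[OF v] by simp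
  then have "y \<in> {vnorm2 (N *\<^sub>v v) |v. v \<in> carrier_vec (dim_col N) \<and> vnorm2 v \<le> 1}"
    using y v N S by auto
  then show "y \<le> Sup {vnorm2 (N *\<^sub>v v) |v. v \<in> carrier_vec (dim_col N) \<and> vnorm2 v \<le> 1}"
    by (rule cSup_upper[OF _ spec_norm_bdd_above])
qed

section \<open>The least-squares estimate\<close>

lemma pow_mat_Suc_left:
  assumes A: "A \<in> carrier_mat n n"
  shows "A ^\<^sub>m Suc t = A * A ^\<^sub>m t"
proof (induction t)
  case 0
  then show ?case using A by simp
next
  case (Suc t)
  have "A ^\<^sub>m Suc (Suc t) = A * A ^\<^sub>m t * A" using Suc.IH by simp
  also have "\<dots> = A * (A ^\<^sub>m t * A)" using assoc_mult_mat[OF A pow_carrier_mat[OF A] A] .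
  finally show ?case by simp
qed

lemma traj_carrier: "A \<in> carrier_mat n n \<Longrightarrow> x0 \<in> carrier_vec n \<Longrightarrow> traj A x0 t \<in> carrier_vec n"
  unfolding traj_def by (simp add: mult_mat_vec_carrier[OF pow_carrier_mat])

lemma traj_Suc: "A \<in> carrier_mat n n \<Longrightarrow> x0 \<in> carrier_vec n \<Longrightarrow> traj A x0 (Suc t) = A *\<^sub>v traj A x0 t"
  unfolding traj_def by (simp only: pow_mat_Suc_left) (simp add: assoc_mult_mat_vec[OF _ pow_carrier_mat])

lemma Xmat_eq_mat_of_cols:
  "x0 \<in> carrier_vec n \<Longrightarrow> Xmat A x0 j = mat_of_cols n (map (traj A x0) [0..<Suc j])"
  unfolding Xmat_def by (intro eq_matI) (auto simp: mat_of_cols_index simp del: upt_Suc)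

lemma Ymat_eq_mult_Xmat:
  assumes A: "A \<in> carrier_mat n n" and x0: "x0 \<in> carrier_vec n"
  shows "Ymat A x0 j = A * Xmat A x0 j"
proof -
  have "A * Xmat A x0 j = mat_of_cols n (map (\<lambda>t. A *\<^sub>v traj A x0 t) [0..<Suc j])"
    unfolding Xmat_eq_mat_of_cols[OF x0]
    using mult_mat_of_cols[OF A, of "map (traj A x0) [0..<Suc j]"] traj_carrier[OF A x0]
    by (auto simp: o_def simp del: upt_Suc)
  then show ?thesis
    using x0 by (intro eq_matI) (auto simp: Ymat_def mat_of_cols_index traj_Suc[OF A x0] simp del: upt_Suc)
qed

lemma Ahat_eq_mult_col_proj:
  assumes A: "A \<in> carrier_mat n n" and x0: "x0 \<in> carrier_vec n"
  shows "Ahat A x0 j = A * (Xmat A x0 j * pinv (Xmat A x0 j))"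
proof -
  have X: "Xmat A x0 j \<in> carrier_mat n (Suc j)"
    unfolding Xmat_eq_mat_of_cols[OF x0] using mat_of_cols_carrier(1)[of n "map (traj A x0) [0..<Suc j]"]
    by (simp del: upt_Suc)
  moreover have "pinv (Xmat A x0 j) \<in> carrier_mat (Suc j) n"
    using is_pinv_pinv[of "Xmat A x0 j"] X unfolding is_pinv_def by auto
  ultimately show ?thesis unfolding Ahat_def Ymat_eq_mult_Xmat[OF A x0] using A by simp
qed

lemma id_minus_error_eq_proj_update:
  fixes Q :: "real mat"
  assumes Q: "Q \<in> carrier_mat n n" and sym: "transpose_mat Q = Q" and idem: "Q * Q = Q"
    and x: "x \<in> carrier_vec n"
  defines "S \<equiv> 1\<^sub>m n - Q" and "w \<equiv> x - Q *\<^sub>v x"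
  shows "1\<^sub>m n - (1\<^sub>m n - (1 / mtrace (S * outer_prod x x)) \<cdot>\<^sub>m (S * outer_prod x x)) * S
       = Q + (1 / (w \<bullet> w)) \<cdot>\<^sub>m outer_prod w w"
proof -
  have S: "S \<in> carrier_mat n n" unfolding S_def using Q by (simp add: minus_carrier_mat)
  have Ssym: "transpose_mat S = S" unfolding S_def using transpose_minus[OF one_carrier_mat Q] sym by simp
  have Qx: "Q *\<^sub>v x \<in> carrier_vec n" and w: "w \<in> carrier_vec n" using Q x by (auto simp: w_def)
  have Sx: "S *\<^sub>v x = w"
    unfolding S_def w_def using minus_mult_distrib_mat_vec[OF one_carrier_mat Q x] x by simp
  have SP: "S * outer_prod x x = outer_prod w x" using mult_outer_prod[OF S x] Sx by simp
  have "x = w + Q *\<^sub>v x" using Q x Qx by (intro eq_vecI) (auto simp: w_def)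
  then have "w \<bullet> x = w \<bullet> w"
    using scalar_prod_add_distrib[OF w w Qx] compl_scalar_prod_proj[OF Q sym idem x x]
    by (simp add: w_def)
  then have tr: "mtrace (outer_prod w x) = w \<bullet> w" using mtrace_outer_prod x w by simp
  define c where "c = 1 / (w \<bullet> w)"
  have O: "outer_prod w x \<in> carrier_mat n n" using w x by simp
  have "(1\<^sub>m n - c \<cdot>\<^sub>m outer_prod w x) * S = S - c \<cdot>\<^sub>m (outer_prod w x * S)"
    using minus_mult_distrib_mat[OF one_carrier_mat smult_carrier_mat[OF O] S] mult_smult_assoc_mat[OF O S]
      S by simp
  also have "outer_prod w x * S = outer_prod w w" using outer_prod_mult[OF S x] Ssym Sx by simp
  finally have "(1\<^sub>m n - c \<cdot>\<^sub>m outer_prod w x) * S = S - c \<cdot>\<^sub>m outer_prod w w" .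
  then show ?thesis
    unfolding SP tr c_def[symmetric] using Q w by (intro eq_matI) (auto simp: S_def)
qed

theorem theorem1:
  fixes A :: "real mat" and x0 :: "real vec" and n k :: nat
  assumes A: "A \<in> carrier_mat n n"
    and x0: "x0 \<in> carrier_vec n"
    and k1: "1 \<le> k" and kn: "k < n"
  defines "S \<equiv> 1\<^sub>m n - Xmat A x0 (k - 1) * pinv (Xmat A x0 (k - 1))"
    and "P \<equiv> mat n n (\<lambda>(i, j). traj A x0 k $ i * traj A x0 k $ j)"
  defines "E \<equiv> (1\<^sub>m n - (1 / mtrace (S * P)) \<cdot>\<^sub>m (S * P)) * S"
  assumes tr: "mtrace (S * P) \<noteq> 0"
  shows "Ahat A x0 k = A * (1\<^sub>m n - E)
         \<and> spec_norm E \<le> spec_norm (1\<^sub>m n - (1 / mtrace (S * P)) \<cdot>\<^sub>m (S * P))"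
proof -
  define xs x where "xs = map (traj A x0) [0..<k]" and "x = traj A x0 k"
  define Q where "Q = Xmat A x0 (k - 1) * pinv (Xmat A x0 (k - 1))"
  define w where "w = x - Q *\<^sub>v x"
  have xs: "set xs \<subseteq> carrier_vec n" and x: "x \<in> carrier_vec n"
    using traj_carrier[OF A x0] by (auto simp: xs_def x_def)
  have X0: "Xmat A x0 (k - 1) = mat_of_cols n xs"
    using Xmat_eq_mat_of_cols[OF x0, of A "k - 1"] k1 by (simp add: xs_def del: upt_Suc)
  have X1: "Xmat A x0 k = mat_of_cols n (xs @ [x])"
    using Xmat_eq_mat_of_cols[OF x0, of A k] by (simp add: xs_def x_def)
  have proj: "is_col_proj (mat_of_cols n xs) Q"
    unfolding Q_def X0 by (rule is_pinv_col_proj[OF is_pinv_pinv])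
  then have Q: "Q \<in> carrier_mat n n" "transpose_mat Q = Q" "Q * Q = Q"
    using is_col_proj_mult_absorb[OF proj proj] unfolding is_col_proj_def by auto
  have S_eq: "S = 1\<^sub>m n - Q" and P_eq: "P = outer_prod x x"
    using x by (auto simp: S_def Q_def P_def x_def outer_prod_def)
  have "Ahat A x0 k = A * (Q + (1 / (w \<bullet> w)) \<cdot>\<^sub>m outer_prod w w)"
    unfolding Ahat_eq_mult_col_proj[OF A x0] X1
    using mult_pinv_eq_col_proj[OF is_col_proj_snoc[OF proj xs x w_def]] by simp
  moreover have "1\<^sub>m n - E = Q + (1 / (w \<bullet> w)) \<cdot>\<^sub>m outer_prod w w"
    unfolding E_def S_eq P_eq w_def by (rule id_minus_error_eq_proj_update[OF Q x])
  moreover have "spec_norm E \<le> spec_norm (1\<^sub>m n - (1 / mtrace (S * P)) \<cdot>\<^sub>m (S * P))"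
    unfolding E_def S_eq P_eq using Q x
    by (intro spec_norm_mult_contraction_le vnorm2_proj_compl_le) (auto simp: minus_carrier_mat)
  ultimately show ?thesis by simp
qed

end
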